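(* Let $g\in C^\omega(\mathbb{R})$ with $g(v)>0$ for $v>0$, and $\beta\in\mathbb{R}$. The set $W^u_\beta(q_0)\cap N_0$ is non-empty and connected.
   Context: $N_1=\{(\eta,w)\in\mathbb{R}_{>0}\times\mathbb{R}:\eta^2w<1\}$, $N_0=\{(\eta,w)\in N_1:w>0\}$. The $(\eta,w)$-system on $N_1$: $\frac{d\eta}{dt}=\frac{\eta}{2}\big(1-3\eta\sqrt{1-\eta^2w}\big)-\frac32\beta\eta^2wg(w)$, $\frac{dw}{dt}=2w$. $q_0=(1/3,0)$ is an equilibrium (saddle with eigenvalues $-1/2$, $2$) and $W^u_\beta(q_0)$ is its unstable manifold. *)

theory Defs
  imports "HOL-Analysis.Analysis"
begin

definition real_analytic :: "(real \<Rightarrow> real) \<Rightarrow> bool" where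
  "real_analytic g \<longleftrightarrow>
     (\<forall>x. \<exists>r>0. \<exists>c::nat \<Rightarrow> real.
        \<forall>y. \<bar>y - x\<bar> < r \<longrightarrow> (\<lambda>n. c n * (y - x) ^ n) sums g y)"

definition N1 :: "(real \<times> real) set" where
  "N1 = {(\<eta>, w). \<eta> > 0 \<and> \<eta>\<^sup>2 * w < 1}"

definition N0 :: "(real \<times> real) set" where
  "N0 = {(\<eta>, w). (\<eta>, w) \<in> N1 \<and> w > 0}"

definition F :: "real \<Rightarrow> (real \<Rightarrow> real) \<Rightarrow> real \<times> real \<Rightarrow> real \<times> real" where
  "F \<beta> g p = (case p of (\<eta>, w) \<Rightarrow>
     (\<eta> / 2 * (1 - 3 * \<eta> * sqrt (1 - \<eta>\<^sup>2 * w)) - 3 / 2 * \<beta> * \<eta>\<^sup>2 * w * g w,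
      2 * w))"

definition q0 :: "real \<times> real" where
  "q0 = (1/3, 0)"

definition Wu :: "real \<Rightarrow> (real \<Rightarrow> real) \<Rightarrow> (real \<times> real) set" where
  "Wu \<beta> g = {p. \<exists>\<gamma> :: real \<Rightarrow> real \<times> real.
      \<gamma> 0 = p \<and>
      (\<forall>t\<le>0. \<gamma> t \<in> N1 \<and> (\<gamma> has_vector_derivative F \<beta> g (\<gamma> t)) (at t within {..0})) \<and>
      (\<gamma> \<longlongrightarrow> q0) at_bot}"

end

theory Submission
  imports Defs "HOL-Real_Asymp.Real_Asymp"
begin

text \<open>
  Put \<open>u = 1/\<eta>\<close>. Along a backward trajectory \<open>w = w\<^sub>0 exp (2t)\<close>, and \<open>u\<close> solves
  \<open>du/dt = recip_drift \<beta> g w u - u/2\<close> with \<open>u \<rightarrow> 3\<close> as \<open>t \<rightarrow> -\<infinity>\<close>.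

  Existence: in the variable \<open>x = exp (t/2)\<close>, with \<open>w = a x\<^sup>4\<close>, such trajectories are the fixed
  points of an integral operator which, for small \<open>a\<close>, halves sup-distances between continuous
  functions \<open>[0,2] \<rightarrow> [2,4]\<close>; its fixed point gives a point of \<open>W\<^sup>u \<inter> N\<^sub>0\<close>.

  Connectedness: as \<open>dw/dt = 2w\<close>, any two trajectories in \<open>N\<^sub>0\<close> can be shifted in time to have
  the same \<open>w\<close>. Where \<open>u \<in> [2,4]\<close> and \<open>w \<le> 2/3\<close> the \<open>u\<close>-equation is dissipative, so the
  squared difference of the two \<open>u\<close>-values is nonincreasing in \<open>t\<close>; since it tends to \<open>0\<close> as
  \<open>t \<rightarrow> -\<infinity>\<close>, it vanishes and the trajectories meet. Hence all backward orbits in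
  \<open>W\<^sup>u \<inter> N\<^sub>0\<close> meet a fixed one, and their union is connected.
\<close>

lemma real_analytic_imp_isCont:
  assumes "real_analytic g"
  shows "isCont g x"
proof -
  obtain r c where r: "r > 0"
    and sums: "\<And>y. \<bar>y - x\<bar> < r \<Longrightarrow> (\<lambda>n. c n * (y - x) ^ n) sums g y"
    using assms unfolding real_analytic_def by blast
  have "summable (\<lambda>n. c n * (r / 2) ^ n)"
    using sums[of "x + r / 2"] r by (simp add: sums_iff)
  then have "isCont (\<lambda>z. \<Sum>n. c n * z ^ n) (x - x)"
    by (rule isCont_powser) (use r in simp)
  then have powser: "isCont (\<lambda>y. \<Sum>n. c n * (y - x) ^ n) x"
    using isCont_o2[where f="\<lambda>y. y - x" and a=x and g="\<lambda>z. \<Sum>n. c n * z ^ n"] by simp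
  have "eventually (\<lambda>y. y \<in> ball x r) (nhds x)"
    using r by (intro eventually_nhds_in_open) auto
  then have "eventually (\<lambda>y. (\<Sum>n. c n * (y - x) ^ n) = g y) (nhds x)"
    by eventually_elim (use sums in \<open>auto simp: dist_real_def sums_iff abs_minus_commute\<close>)
  from isCont_cong[OF this] powser show ?thesis
    by simp
qed

lemma abs_sqrt_diff_le:
  fixes p q :: real
  assumes "1/4 \<le> p" "1/4 \<le> q"
  shows "\<bar>sqrt p - sqrt q\<bar> \<le> \<bar>p - q\<bar>"
proof -
  have "sqrt p \<ge> 1/2" "sqrt q \<ge> 1/2"
    using assms real_sqrt_le_mono[of "1/4"] by (auto simp: real_sqrt_divide)
  moreover have "p - q = (sqrt p - sqrt q) * (sqrt p + sqrt q)"
    using assms by (simp add: algebra_simps)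
  ultimately show ?thesis
    by (simp add: abs_mult mult_le_cancel_left1)
qed

lemma abs_sqrt_one_minus_le:
  fixes x :: real
  assumes "0 \<le> x" "x \<le> 1"
  shows "\<bar>sqrt (1 - x) - 1\<bar> \<le> x"
proof -
  have "1 - x = sqrt (1 - x) * sqrt (1 - x)"
    using assms by simp
  also have "\<dots> \<le> sqrt (1 - x) * 1"
    using assms by (intro mult_left_mono) auto
  finally show ?thesis
    using assms by simp
qed

lemma abs_integral_le_bound_times_length:
  fixes f :: "real \<Rightarrow> real"
  assumes "continuous_on {0..x} f" "0 \<le> x" "0 \<le> B" "\<And>y. y \<in> {0..x} \<Longrightarrow> \<bar>f y\<bar> \<le> B"
  shows "\<bar>integral {0..x} f\<bar> \<le> B * x"
proof -
  have "(f has_integral integral {0..x} f) (cbox 0 x)"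
    using integrable_integral[OF integrable_continuous_real[OF assms(1)]] by simp
  from has_integral_bound[OF assms(3) this] assms(2,4) show ?thesis
    by (auto simp: content_real)
qed

lemma DERIV_nonpos_imp_le_limit_at_bot:
  fixes Q :: "real \<Rightarrow> real"
  assumes "\<And>s. s \<le> N \<Longrightarrow> \<exists>y. (Q has_real_derivative y) (at s) \<and> y \<le> 0"
    and "(Q \<longlongrightarrow> L) at_bot"
  shows "Q N \<le> L"
proof -
  have "Q N \<le> Q s" if "s \<le> N" for s
    by (rule DERIV_nonpos_imp_nonincreasing[OF that]) (use assms(1) in simp)
  then have "eventually (\<lambda>s. Q N \<le> Q s) at_bot"
    unfolding eventually_at_bot_linorder by blast
  then show ?thesis
    using assms(2) by (intro tendsto_lowerbound) auto
qed

section \<open>The reciprocal coordinate\<close>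

text \<open>In the coordinate \<open>u = 1/\<eta>\<close> the \<open>\<eta>\<close>-equation becomes
  \<open>du/dt = recip_drift \<beta> g w u - u/2\<close>.\<close>
definition recip_drift :: "real \<Rightarrow> (real \<Rightarrow> real) \<Rightarrow> real \<Rightarrow> real \<Rightarrow> real" where
  "recip_drift \<beta> g w u = 3/2 * (sqrt (1 - w / u\<^sup>2) + \<beta> * w * g w)"

lemma F_recip:
  assumes "u \<noteq> 0"
  shows "F \<beta> g (1 / u, w) = (- (recip_drift \<beta> g w u - u / 2) / u\<^sup>2, 2 * w)"
  using assms unfolding F_def recip_drift_def by (simp add: field_simps power2_eq_square)

lemma divide_square_bounds:
  fixes w u :: real
  assumes "0 \<le> w" "2 \<le> u"
  shows "0 \<le> w / u\<^sup>2" "w / u\<^sup>2 \<le> w / 4"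
proof -
  have "4 \<le> u\<^sup>2"
    using assms power_mono[of 2 u 2] by simp
  then show "w / u\<^sup>2 \<le> w / 4"
    using assms by (intro divide_left_mono) auto
qed (use assms in simp)

lemma recip_drift_lipschitz:
  assumes "0 \<le> w" "w \<le> 1" "u1 \<in> {2..4}" "u2 \<in> {2..4}"
  shows "\<bar>recip_drift \<beta> g w u1 - recip_drift \<beta> g w u2\<bar> \<le> 3/4 * w * \<bar>u1 - u2\<bar>"
proof -
  have "u1\<^sup>2 * u2\<^sup>2 \<ge> 4 * 4"
    using assms power_mono[of 2 u1 2] power_mono[of 2 u2 2] by (intro mult_mono) auto
  then have bound: "(u1 + u2) / (u1\<^sup>2 * u2\<^sup>2) \<le> 1/2"
    using assms by (simp add: divide_simps)
  have "w / u1\<^sup>2 - w / u2\<^sup>2 = w * (u2 - u1) * ((u1 + u2) / (u1\<^sup>2 * u2\<^sup>2))"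
    using assms by (simp add: field_simps power2_eq_square)
  then have "\<bar>w / u1\<^sup>2 - w / u2\<^sup>2\<bar> = w * \<bar>u1 - u2\<bar> * ((u1 + u2) / (u1\<^sup>2 * u2\<^sup>2))"
    using assms by (simp add: abs_mult abs_minus_commute)
  also have "\<dots> \<le> w * \<bar>u1 - u2\<bar> * (1/2)"
    using bound assms by (intro mult_left_mono) auto
  finally have quot: "\<bar>w / u1\<^sup>2 - w / u2\<^sup>2\<bar> \<le> w * \<bar>u1 - u2\<bar> * (1/2)" .
  have sqrt_diff: "\<bar>sqrt (1 - w / u1\<^sup>2) - sqrt (1 - w / u2\<^sup>2)\<bar> \<le> \<bar>w / u1\<^sup>2 - w / u2\<^sup>2\<bar>"
    using abs_sqrt_diff_le[of "1 - w / u1\<^sup>2" "1 - w / u2\<^sup>2"]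
      divide_square_bounds[of w u1] divide_square_bounds[of w u2] assms
    by (simp add: abs_minus_commute)
  have diff_eq: "recip_drift \<beta> g w u1 - recip_drift \<beta> g w u2
      = 3/2 * (sqrt (1 - w / u1\<^sup>2) - sqrt (1 - w / u2\<^sup>2))"
    unfolding recip_drift_def by (simp add: algebra_simps)
  have "\<bar>recip_drift \<beta> g w u1 - recip_drift \<beta> g w u2\<bar>
      = 3/2 * \<bar>sqrt (1 - w / u1\<^sup>2) - sqrt (1 - w / u2\<^sup>2)\<bar>"
    by (subst diff_eq, simp only: abs_mult)
  also have "\<dots> \<le> 3/2 * (w * \<bar>u1 - u2\<bar> * (1/2))"
    using sqrt_diff quot by (intro mult_left_mono) auto
  finally show ?thesis
    by simp
qed

lemma abs_recip_drift_minus_le: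
  assumes "0 \<le> w" "w \<le> 1" "2 \<le> u" "\<bar>g w\<bar> \<le> C"
  shows "\<bar>recip_drift \<beta> g w u - 3/2\<bar> \<le> 3/2 * (1/4 + \<bar>\<beta>\<bar> * C) * w"
proof -
  have "\<bar>sqrt (1 - w / u\<^sup>2) - 1\<bar> \<le> w / u\<^sup>2"
    by (intro abs_sqrt_one_minus_le; use divide_square_bounds[OF assms(1,3)] assms(2) in linarith)
  then have sqrt_dev: "\<bar>sqrt (1 - w / u\<^sup>2) - 1\<bar> \<le> w / 4"
    using divide_square_bounds[OF assms(1,3)] by linarith
  have "\<bar>\<beta> * w * g w\<bar> = \<bar>\<beta>\<bar> * w * \<bar>g w\<bar>"
    using assms by (simp add: abs_mult)
  also have "\<dots> \<le> \<bar>\<beta>\<bar> * w * C"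
    using assms by (intro mult_left_mono) auto
  finally have g_dev: "\<bar>\<beta> * w * g w\<bar> \<le> \<bar>\<beta>\<bar> * w * C" .
  have dev_eq: "recip_drift \<beta> g w u - 3/2 = 3/2 * ((sqrt (1 - w / u\<^sup>2) - 1) + \<beta> * w * g w)"
    unfolding recip_drift_def by (simp add: algebra_simps)
  have "\<bar>recip_drift \<beta> g w u - 3/2\<bar> = 3/2 * \<bar>(sqrt (1 - w / u\<^sup>2) - 1) + \<beta> * w * g w\<bar>"
    by (subst dev_eq, simp only: abs_mult)
  also have "\<dots> \<le> 3/2 * (w / 4 + \<bar>\<beta>\<bar> * w * C)"
    by (intro mult_left_mono order_trans[OF abs_triangle_ineq] add_mono sqrt_dev g_dev) auto
  also have "\<dots> = 3/2 * (1/4 + \<bar>\<beta>\<bar> * C) * w"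
    by (simp add: algebra_simps)
  finally show ?thesis .
qed

section \<open>Backward trajectories\<close>

lemma has_vector_derivative_fst:
  "(f has_vector_derivative v) net \<Longrightarrow> ((\<lambda>t. fst (f t)) has_real_derivative fst v) net"
  unfolding has_real_derivative_iff_has_vector_derivative has_vector_derivative_def
  by (drule has_derivative_fst) simp

lemma has_vector_derivative_snd:
  "(f has_vector_derivative v) net \<Longrightarrow> ((\<lambda>t. snd (f t)) has_real_derivative snd v) net"
  unfolding has_real_derivative_iff_has_vector_derivative has_vector_derivative_def
  by (drule has_derivative_snd) simp

definition unstable_traj :: "real \<Rightarrow> (real \<Rightarrow> real) \<Rightarrow> real \<times> real \<Rightarrow> (real \<Rightarrow> real \<times> real) \<Rightarrow> bool"
  where "unstable_traj \<beta> g p \<gamma> \<longleftrightarrow> \<gamma> 0 = p \<and>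
      (\<forall>t\<le>0. \<gamma> t \<in> N1 \<and> (\<gamma> has_vector_derivative F \<beta> g (\<gamma> t)) (at t within {..0})) \<and>
      (\<gamma> \<longlongrightarrow> q0) at_bot"

lemma N1_iff: "p \<in> N1 \<longleftrightarrow> 0 < fst p \<and> (fst p)\<^sup>2 * snd p < 1"
  by (cases p) (simp add: N1_def)

lemma N0_iff: "p \<in> N0 \<longleftrightarrow> p \<in> N1 \<and> 0 < snd p"
  by (cases p) (simp add: N0_def)

lemma snd_F: "snd (F \<beta> g p) = 2 * snd p"
  by (cases p) (simp add: F_def)

lemma Wu_eq: "Wu \<beta> g = {p. \<exists>\<gamma>. unstable_traj \<beta> g p \<gamma>}"
  by (simp add: Wu_def unstable_traj_def)

lemma unstable_traj_snd:
  assumes traj: "unstable_traj \<beta> g p \<gamma>" and "t \<le> 0"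
  shows "snd (\<gamma> t) = snd p * exp (2 * t)"
proof -
  have "((\<lambda>s. snd (\<gamma> s) / exp (2 * s)) has_real_derivative 0) (at s within {..0})" if "s \<in> {..0}" for s
  proof -
    have "((\<lambda>s. snd (\<gamma> s)) has_real_derivative 2 * snd (\<gamma> s)) (at s within {..0})"
      using traj that unfolding unstable_traj_def
      by (auto dest!: has_vector_derivative_snd simp: snd_F)
    moreover have "((\<lambda>s. exp (2 * s)) has_real_derivative exp (2 * s) * 2) (at s within {..0})"
      by (auto intro!: derivative_eq_intros)
    ultimately have "((\<lambda>s. snd (\<gamma> s) / exp (2 * s)) has_real_derivative
        (2 * snd (\<gamma> s) * exp (2 * s) - snd (\<gamma> s) * (exp (2 * s) * 2)) / (exp (2 * s) * exp (2 * s)))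
        (at s within {..0})"
      by (rule DERIV_divide) simp
    then show ?thesis
      by simp
  qed
  then have "\<exists>c. \<forall>s\<in>{..0}. snd (\<gamma> s) / exp (2 * s) = c"
    by (rule has_field_derivative_zero_constant[OF convex_real_interval(2)])
  then obtain c where c: "\<And>s. s \<in> {..0} \<Longrightarrow> snd (\<gamma> s) / exp (2 * s) = c"
    by blast
  have "c = snd p"
    using c[of 0] traj by (simp add: unstable_traj_def)
  with c[of t] assms(2) show ?thesis
    by (simp add: field_simps)
qed

lemma unstable_traj_shift:
  assumes traj: "unstable_traj \<beta> g p \<gamma>" and t: "t \<le> 0"
  shows "unstable_traj \<beta> g (\<gamma> t) (\<lambda>s. \<gamma> (s + t))"
  unfolding unstable_traj_def
proof (intro conjI allI impI)
  fix s :: real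
  assume s: "s \<le> 0"
  then show "\<gamma> (s + t) \<in> N1"
    using traj t unfolding unstable_traj_def by auto
  have "(\<gamma> has_vector_derivative F \<beta> g (\<gamma> (s + t))) (at (s + t) within {..0})"
    using traj s t unfolding unstable_traj_def by auto
  then have "(\<gamma> has_vector_derivative F \<beta> g (\<gamma> (s + t))) (at (s + t) within (\<lambda>s. s + t) ` {..0})"
    by (rule has_vector_derivative_within_subset) (use t in auto)
  then have "((\<gamma> \<circ> (\<lambda>s. s + t)) has_vector_derivative 1 *\<^sub>R F \<beta> g (\<gamma> (s + t))) (at s within {..0})"
    by (intro vector_diff_chain_within) (auto intro!: derivative_eq_intros)
  then show "((\<lambda>s. \<gamma> (s + t)) has_vector_derivative F \<beta> g (\<gamma> (s + t))) (at s within {..0})"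
    by (simp add: o_def)
next
  have "filterlim (\<lambda>s. s + t) at_bot at_bot"
    by real_asymp
  moreover have "(\<gamma> \<longlongrightarrow> q0) at_bot"
    using traj by (simp add: unstable_traj_def)
  ultimately show "((\<lambda>s. \<gamma> (s + t)) \<longlongrightarrow> q0) at_bot"
    by (rule filterlim_compose[rotated])
qed simp

lemma unstable_traj_continuous_on: "unstable_traj \<beta> g p \<gamma> \<Longrightarrow> continuous_on {..0} \<gamma>"
  unfolding unstable_traj_def continuous_on_eq_continuous_within
  by (auto intro: has_vector_derivative_continuous)

lemma unstable_traj_recip_tendsto:
  assumes "unstable_traj \<beta> g p \<gamma>"
  shows "((\<lambda>s. 1 / fst (\<gamma> s)) \<longlongrightarrow> 3) at_bot"
proof -
  have "((\<lambda>s. fst (\<gamma> s)) \<longlongrightarrow> fst q0) at_bot"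
    using assms tendsto_fst[of \<gamma> q0 at_bot] by (simp add: unstable_traj_def)
  then have "((\<lambda>s. 1 / fst (\<gamma> s)) \<longlongrightarrow> 1 / fst q0) at_bot"
    by (rule tendsto_divide[OF tendsto_const]) (simp add: q0_def)
  then show ?thesis
    by (simp add: q0_def)
qed

lemma fst_F_recip:
  assumes "e \<noteq> 0"
  shows "fst (F \<beta> g (e, w)) = - e\<^sup>2 * (recip_drift \<beta> g w (1 / e) - 1 / e / 2)"
  using F_recip[of "1 / e" \<beta> g w] assms by (simp add: field_simps power2_eq_square)

lemma unstable_traj_recip_has_derivative:
  assumes traj: "unstable_traj \<beta> g p \<gamma>" and s: "s < 0"
  shows "((\<lambda>s. 1 / fst (\<gamma> s)) has_real_derivative
      recip_drift \<beta> g (snd (\<gamma> s)) (1 / fst (\<gamma> s)) - 1 / fst (\<gamma> s) / 2) (at s)"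
proof -
  let ?e = "fst (\<gamma> s)" and ?w = "snd (\<gamma> s)"
  have "\<gamma> s \<in> N1" "(\<gamma> has_vector_derivative F \<beta> g (\<gamma> s)) (at s within {..0})"
    using traj s unfolding unstable_traj_def by auto
  then have "?e > 0" and "(\<gamma> has_vector_derivative F \<beta> g (\<gamma> s)) (at s within {..<0})"
    by (auto simp: N1_iff intro: has_vector_derivative_within_subset[of _ _ _ "{..0}"])
  then have "(\<gamma> has_vector_derivative F \<beta> g (\<gamma> s)) (at s)"
    using s by (subst (asm) has_vector_derivative_within_open) auto
  from has_vector_derivative_fst[OF this]
  have "((\<lambda>s. 1 / fst (\<gamma> s)) has_real_derivative
      (0 * ?e - 1 * fst (F \<beta> g (\<gamma> s))) / (?e * ?e)) (at s)"
    by (rule DERIV_divide[OF DERIV_const]) (use \<open>?e > 0\<close> in simp)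
  then show ?thesis
    using fst_F_recip[of ?e \<beta> g ?w] \<open>?e > 0\<close> by (simp add: power2_eq_square)
qed

section \<open>Existence by a contraction argument\<close>

text \<open>Banach's fixed point argument for an operator halving sup-distances on \<open>S\<close>, phrased
  pointwise so that no metric on the function space is needed.\<close>
locale halving_map =
  fixes S :: "'a set" and D :: "('a \<Rightarrow> real) set"
    and T :: "('a \<Rightarrow> real) \<Rightarrow> 'a \<Rightarrow> real" and u0 :: "'a \<Rightarrow> real"
  assumes start: "u0 \<in> D"
    and maps_to: "U \<in> D \<Longrightarrow> T U \<in> D"
    and first_step: "x \<in> S \<Longrightarrow> \<bar>T u0 x - u0 x\<bar> \<le> 1"
    and halving: "\<lbrakk>U \<in> D; V \<in> D; \<And>y. y \<in> S \<Longrightarrow> \<bar>U y - V y\<bar> \<le> e; x \<in> S\<rbrakk>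
      \<Longrightarrow> \<bar>T U x - T V x\<bar> \<le> e / 2"
    and closed_uniform_limit: "\<lbrakk>\<And>n. Us n \<in> D; uniform_limit S Us L sequentially\<rbrakk> \<Longrightarrow> L \<in> D"
begin

lemma iterate_in: "(T ^^ n) u0 \<in> D"
  by (induction n) (simp_all add: start maps_to)

lemma iterate_step: "x \<in> S \<Longrightarrow> \<bar>(T ^^ Suc n) u0 x - (T ^^ n) u0 x\<bar> \<le> (1/2) ^ n"
proof (induction n arbitrary: x)
  case 0
  then show ?case
    using first_step by simp
next
  case (Suc n)
  then show ?case
    using halving[OF iterate_in iterate_in Suc.IH Suc.prems] by simp
qed

lemma iterate_dist:
  assumes "x \<in> S" "n \<le> m"
  shows "\<bar>(T ^^ m) u0 x - (T ^^ n) u0 x\<bar> \<le> 2 * (1/2) ^ n"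
proof -
  obtain k where m: "m = n + k"
    using assms(2) le_Suc_ex by blast
  have "\<bar>(T ^^ (n + k)) u0 x - (T ^^ n) u0 x\<bar> \<le> 2 * (1/2) ^ n - 2 * (1/2) ^ (n + k)"
  proof (induction k)
    case (Suc k)
    then show ?case
      using iterate_step[OF assms(1), of "n + k"] by simp
  qed simp
  then show ?thesis
    unfolding m using zero_le_power[of "1/2::real" "n + k"] by linarith
qed

lemma iterates_uniformly_Cauchy: "uniformly_Cauchy_on S (\<lambda>n. (T ^^ n) u0)"
proof (rule uniformly_Cauchy_onI)
  fix e :: real
  assume "e > 0"
  then obtain M where M: "(1/2::real) ^ M < e / 4"
    using real_arch_pow_inv[of "e / 4" "1/2"] by auto
  have "dist ((T ^^ m) u0 x) ((T ^^ n) u0 x) < e" if "x \<in> S" "M \<le> m" "M \<le> n" for x m n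
    using iterate_dist[OF that(1,2)] iterate_dist[OF that(1,3)] M by (simp add: dist_real_def)
  then show "\<exists>M. \<forall>x\<in>S. \<forall>m\<ge>M. \<forall>n\<ge>M. dist ((T ^^ m) u0 x) ((T ^^ n) u0 x) < e"
    by blast
qed

lemma fixed_point_exists: "\<exists>L\<in>D. \<forall>x\<in>S. T L x = L x"
proof -
  let ?u = "\<lambda>n. (T ^^ n) u0"
  obtain L where L: "uniform_limit S ?u L sequentially"
    using Cauchy_uniformly_convergent[OF iterates_uniformly_Cauchy] uniformly_convergent_on_def
    by blast
  have "L \<in> D"
    using closed_uniform_limit[OF iterate_in L] .
  have lim: "(\<lambda>n. ?u n x) \<longlonglongrightarrow> L x" if "x \<in> S" for x
    using tendsto_uniform_limitI[OF L that] .
  have L_dist: "\<bar>?u n x - L x\<bar> \<le> 2 * (1/2) ^ n" if "x \<in> S" for x n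
  proof -
    have "(\<lambda>k. \<bar>?u (k + n) x - ?u n x\<bar>) \<longlonglongrightarrow> \<bar>L x - ?u n x\<bar>"
      by (intro tendsto_intros LIMSEQ_ignore_initial_segment lim that)
    moreover have "\<bar>?u (k + n) x - ?u n x\<bar> \<le> 2 * (1/2) ^ n" for k
      using iterate_dist[OF that] by simp
    ultimately show ?thesis
      by (subst abs_minus_commute) (rule LIMSEQ_le_const2, blast+)
  qed
  have "T L x = L x" if "x \<in> S" for x
  proof -
    have "\<bar>?u (Suc n) x - T L x\<bar> \<le> (1/2) ^ n" for n
    proof -
      have "\<forall>y\<in>S. \<bar>?u n y - L y\<bar> \<le> 2 * (1/2) ^ n"
        using L_dist by blast
      from halving[OF iterate_in \<open>L \<in> D\<close> this[rule_format] that] show ?thesis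
        by simp
    qed
    then have "(\<lambda>n. ?u (Suc n) x - T L x) \<longlonglongrightarrow> 0"
      by (intro Lim_null_comparison[OF always_eventually LIMSEQ_realpow_zero]) auto
    then have "(\<lambda>n. ?u (Suc n) x) \<longlonglongrightarrow> T L x"
      by (rule LIM_zero_cancel)
    moreover have "(\<lambda>n. ?u (Suc n) x) \<longlonglongrightarrow> L x"
      using LIMSEQ_Suc[OF lim[OF that]] .
    ultimately show ?thesis
      by (rule LIMSEQ_unique)
  qed
  with \<open>L \<in> D\<close> show ?thesis
    by blast
qed

end

locale recip_integral_equation =
  fixes \<beta> :: real and g :: "real \<Rightarrow> real" and C a :: real
  assumes g_cont: "continuous_on UNIV g"
    and g_bound: "\<And>w. w \<in> {0..1} \<Longrightarrow> \<bar>g w\<bar> \<le> C"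
    and a_pos: "0 < a"
    and a_small: "48 * a * (1 + \<bar>\<beta>\<bar> * C) \<le> 1"
begin

definition admissible :: "(real \<Rightarrow> real) set" where
  "admissible = {U. continuous_on {0..2} U \<and> (\<forall>x\<in>{0..2}. 2 \<le> U x \<and> U x \<le> 4)}"

text \<open>Along \<open>w = a x\<^sup>4\<close>, \<open>x = exp (t/2)\<close>, the equation \<open>du/dt = recip_drift \<beta> g w u - u/2\<close>
  for \<open>u = U x\<close> reads \<open>(x U x)' = integrand U x + 3\<close>; its solutions with \<open>U 0 = 3\<close> are the
  fixed points of \<open>recip_op\<close> (at \<open>x = 0\<close> division by zero yields the intended value \<open>3\<close>).\<close>
definition integrand :: "(real \<Rightarrow> real) \<Rightarrow> real \<Rightarrow> real" where
  "integrand U y = 2 * recip_drift \<beta> g (a * y ^ 4) (U y) - 3"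

definition recip_op :: "(real \<Rightarrow> real) \<Rightarrow> real \<Rightarrow> real" where
  "recip_op U x = 3 + integral {0..x} (integrand U) / x"

lemma admissibleD: "U \<in> admissible \<Longrightarrow> x \<in> {0..2} \<Longrightarrow> 2 \<le> U x \<and> U x \<le> 4"
  by (simp add: admissible_def)

lemma a_bounds: "48 * a \<le> 1" "48 * a * (1/4 + \<bar>\<beta>\<bar> * C) \<le> 1"
proof -
  have "0 \<le> C"
    using g_bound[of 0] by simp
  then have "0 \<le> a * (\<bar>\<beta>\<bar> * C)"
    using a_pos by simp
  then show "48 * a \<le> 1" "48 * a * (1/4 + \<bar>\<beta>\<bar> * C) \<le> 1"
    using a_small a_pos by (simp_all add: algebra_simps)
qed

lemma weight_bounds:
  assumes "y \<in> {0..2}"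
  shows "0 \<le> a * y ^ 4" "a * y ^ 4 \<le> 16 * a"
proof -
  have "y ^ 4 \<le> 2 ^ 4"
    using assms by (intro power_mono) auto
  then show "a * y ^ 4 \<le> 16 * a"
    using a_pos by simp
qed (use assms a_pos in simp)

lemma integrand_continuous:
  assumes "U \<in> admissible"
  shows "continuous_on {0..2} (integrand U)"
proof -
  have "continuous_on {0..2} (\<lambda>y. g (a * y ^ 4))"
    by (rule continuous_on_compose2[OF g_cont]) (auto intro!: continuous_intros)
  moreover have "U y \<noteq> 0" if "y \<in> {0..2}" for y
    using admissibleD[OF assms that] by linarith
  ultimately show ?thesis
    using assms unfolding integrand_def recip_drift_def admissible_def
    by (auto intro!: continuous_intros)
qed

lemma abs_integrand_le:
  assumes "U \<in> admissible" "y \<in> {0..2}"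
  shows "\<bar>integrand U y\<bar> \<le> 3 * a * (1/4 + \<bar>\<beta>\<bar> * C) * y ^ 4"
proof -
  have "\<bar>recip_drift \<beta> g (a * y ^ 4) (U y) - 3/2\<bar> \<le> 3/2 * (1/4 + \<bar>\<beta>\<bar> * C) * (a * y ^ 4)"
    using weight_bounds[OF assms(2)] a_bounds admissibleD[OF assms]
    by (intro abs_recip_drift_minus_le g_bound) auto
  then show ?thesis
    unfolding integrand_def by (simp add: algebra_simps)
qed

lemma integrand_lipschitz:
  assumes "U \<in> admissible" "V \<in> admissible" "\<And>y. y \<in> {0..2} \<Longrightarrow> \<bar>U y - V y\<bar> \<le> e"
    and "y \<in> {0..2}"
  shows "\<bar>integrand U y - integrand V y\<bar> \<le> e / 2"
proof -
  have "\<bar>recip_drift \<beta> g (a * y ^ 4) (U y) - recip_drift \<beta> g (a * y ^ 4) (V y)\<bar>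
      \<le> 3/4 * (a * y ^ 4) * \<bar>U y - V y\<bar>"
    using weight_bounds[OF assms(4)] a_bounds admissibleD[OF assms(1,4)] admissibleD[OF assms(2,4)]
    by (intro recip_drift_lipschitz) auto
  also have "\<dots> = 3/4 * (a * y ^ 4 * \<bar>U y - V y\<bar>)"
    by simp
  also have "\<dots> \<le> 3/4 * (16 * a * e)"
    by (rule mult_left_mono[OF mult_mono]) (use weight_bounds[OF assms(4)] assms(3,4) a_pos in auto)
  also have "\<dots> = (48 * a) * (e / 4)"
    by simp
  also have "\<dots> \<le> e / 4"
    using a_bounds(1) a_pos assms(3)[OF assms(4)] by (intro mult_left_le_one_le) auto
  finally show ?thesis
    unfolding integrand_def
    using abs_mult[of 2 "recip_drift \<beta> g (a * y ^ 4) (U y) - recip_drift \<beta> g (a * y ^ 4) (V y)"]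
    by (simp add: right_diff_distrib)
qed

lemma recip_op_zero: "recip_op U 0 = 3"
  by (simp add: recip_op_def)

lemma abs_recip_op_minus_le:
  assumes "U \<in> admissible" "x \<in> {0..2}"
  shows "\<bar>recip_op U x - 3\<bar> \<le> 3 * a * (1/4 + \<bar>\<beta>\<bar> * C) * x ^ 4"
proof (cases "x = 0")
  case False
  have "\<bar>integral {0..x} (integrand U)\<bar> \<le> (3 * a * (1/4 + \<bar>\<beta>\<bar> * C) * x ^ 4) * x"
  proof (rule abs_integral_le_bound_times_length)
    show "continuous_on {0..x} (integrand U)"
      using assms(2) by (intro continuous_on_subset[OF integrand_continuous[OF assms(1)]]) auto
    show "\<bar>integrand U y\<bar> \<le> 3 * a * (1/4 + \<bar>\<beta>\<bar> * C) * x ^ 4" if "y \<in> {0..x}" for y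
      using abs_integrand_le[OF assms(1), of y] that assms(2) a_pos g_bound[of 0]
      by (force intro: order_trans mult_left_mono power_mono)
  qed (use assms(2) a_pos g_bound[of 0] in auto)
  then show ?thesis
    using False assms(2) by (simp add: recip_op_def pos_divide_le_eq)
qed (simp add: recip_op_zero)

lemma recip_op_lipschitz:
  assumes "U \<in> admissible" "V \<in> admissible" "\<And>y. y \<in> {0..2} \<Longrightarrow> \<bar>U y - V y\<bar> \<le> e"
    and "x \<in> {0..2}"
  shows "\<bar>recip_op U x - recip_op V x\<bar> \<le> e / 2"
proof (cases "x = 0")
  case False
  have cont: "continuous_on {0..x} (integrand W)" if "W \<in> admissible" for W
    using assms(4) by (intro continuous_on_subset[OF integrand_continuous[OF that]]) auto
  have "\<bar>integral {0..x} (\<lambda>y. integrand U y - integrand V y)\<bar> \<le> e / 2 * x"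
    using assms(4) assms(3)[of 0]
    by (intro abs_integral_le_bound_times_length continuous_on_diff cont assms(1,2)
        integrand_lipschitz[OF assms(1-3)]) auto
  moreover have "integral {0..x} (\<lambda>y. integrand U y - integrand V y)
      = integral {0..x} (integrand U) - integral {0..x} (integrand V)"
    by (intro integral_diff integrable_continuous_real cont assms(1,2))
  ultimately show ?thesis
    using False assms(4) by (simp add: recip_op_def diff_divide_distrib[symmetric] pos_divide_le_eq)
qed (use assms(3)[of 0] in \<open>simp add: recip_op_zero\<close>)

lemma recip_op_has_derivative:
  assumes "U \<in> admissible" "x \<in> {0..2}" "x \<noteq> 0"
  shows "(recip_op U has_real_derivative (integrand U x + 3 - recip_op U x) / x) (at x within {0..2})"
proof -
  have "((\<lambda>x. integral {0..x} (integrand U)) has_real_derivative integrand U x) (at x within {0..2})"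
    by (rule integral_has_real_derivative[OF integrand_continuous[OF assms(1)] assms(2)])
  then have "((\<lambda>x. 3 + integral {0..x} (integrand U) / x) has_real_derivative
      0 + (integrand U x * x - integral {0..x} (integrand U) * 1) / (x * x)) (at x within {0..2})"
    by (intro DERIV_add DERIV_const DERIV_divide DERIV_ident assms(3)) auto
  moreover have "0 + (integrand U x * x - integral {0..x} (integrand U) * 1) / (x * x)
      = (integrand U x + 3 - recip_op U x) / x"
    using assms(3) by (simp add: recip_op_def field_simps)
  ultimately show ?thesis
    by (simp add: recip_op_def[abs_def])
qed

lemma recip_op_continuous:
  assumes "U \<in> admissible"
  shows "continuous_on {0..2} (recip_op U)"
  unfolding continuous_on_eq_continuous_within
proof
  fix x :: real
  assume x: "x \<in> {0..2}"
  show "continuous (at x within {0..2}) (recip_op U)"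
  proof (cases "x = 0")
    case True
    let ?bound = "\<lambda>y. 3 * a * (1/4 + \<bar>\<beta>\<bar> * C) * y ^ 4"
    have "((\<lambda>y. recip_op U y - 3) \<longlongrightarrow> 0) (at 0 within {0..2})"
    proof (rule Lim_null_comparison)
      show "eventually (\<lambda>y. norm (recip_op U y - 3) \<le> ?bound y) (at 0 within {0..2})"
        using abs_recip_op_minus_le[OF assms] by (auto simp: eventually_at_filter)
      have "(?bound \<longlongrightarrow> ?bound 0) (at 0 within {0..2})"
        by (intro tendsto_intros)
      then show "(?bound \<longlongrightarrow> 0) (at 0 within {0..2})"
        by simp
    qed
    then show ?thesis
      using True by (simp add: continuous_within recip_op_zero LIM_zero_cancel)
  next
    case False
    show ?thesis
      by (rule DERIV_continuous[OF recip_op_has_derivative[OF assms x False]])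
  qed
qed

lemma recip_op_admissible: "U \<in> admissible \<Longrightarrow> recip_op U \<in> admissible"
proof -
  assume U: "U \<in> admissible"
  have "\<bar>recip_op U x - 3\<bar> \<le> 1" if "x \<in> {0..2}" for x
  proof -
    have "x ^ 4 \<le> 2 ^ 4"
      using that by (intro power_mono) auto
    have "\<bar>recip_op U x - 3\<bar> \<le> 3 * a * (1/4 + \<bar>\<beta>\<bar> * C) * x ^ 4"
      by (rule abs_recip_op_minus_le[OF U that])
    also have "\<dots> \<le> 3 * a * (1/4 + \<bar>\<beta>\<bar> * C) * 16"
      using \<open>x ^ 4 \<le> 2 ^ 4\<close> a_pos g_bound[of 0] by (intro mult_left_mono) auto
    also have "\<dots> = 48 * a * (1/4 + \<bar>\<beta>\<bar> * C)"
      by simp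
    finally show ?thesis
      using a_bounds(2) by linarith
  qed
  then show "recip_op U \<in> admissible"
    using recip_op_continuous[OF U] by (auto simp: admissible_def abs_le_iff)
qed

sublocale halving_map "{0..2}" admissible recip_op "\<lambda>_. 3"
proof
  show "(\<lambda>_. 3) \<in> admissible"
    by (simp add: admissible_def)
  show "recip_op U \<in> admissible" if "U \<in> admissible" for U
    using recip_op_admissible[OF that] .
  show "\<bar>recip_op (\<lambda>_. 3) x - 3\<bar> \<le> 1" if "x \<in> {0..2}" for x
    using recip_op_admissible[of "\<lambda>_. 3"] that by (auto simp: admissible_def abs_le_iff)
  show "\<bar>recip_op U x - recip_op V x\<bar> \<le> e / 2"
    if "U \<in> admissible" "V \<in> admissible" "\<And>y. y \<in> {0..2} \<Longrightarrow> \<bar>U y - V y\<bar> \<le> e" "x \<in> {0..2}"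
    for U V e x
    using recip_op_lipschitz[OF that] .
  show "L \<in> admissible"
    if Us: "\<And>n. Us n \<in> admissible" and L: "uniform_limit {0..2} Us L sequentially" for Us L
  proof -
    have "continuous_on {0..2} L"
      by (rule uniform_limit_theorem[OF _ L]) (use Us in \<open>auto simp: admissible_def\<close>)
    moreover have "2 \<le> L x \<and> L x \<le> 4" if "x \<in> {0..2}" for x
      using tendsto_uniform_limitI[OF L that] admissibleD[OF Us that]
      by (auto intro: LIMSEQ_le_const LIMSEQ_le_const2)
    ultimately show ?thesis
      by (simp add: admissible_def)
  qed
qed

lemma exp_half_in_domain:
  fixes t :: real
  assumes "t \<le> 0"
  shows "exp (t / 2) \<in> {0..2}"
proof -
  have "exp (t / 2) \<le> 1"
    using assms by simp
  then show ?thesis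
    unfolding atLeastAtMost_iff by (intro conjI) (simp, linarith)
qed

lemma recip_op_exp_has_derivative:
  assumes L: "L \<in> admissible" and fixed: "\<And>x. x \<in> {0..2} \<Longrightarrow> recip_op L x = L x" and t: "t \<le> 0"
  shows "((\<lambda>t. recip_op L (exp (t / 2))) has_real_derivative
      recip_drift \<beta> g (a * exp (2 * t)) (recip_op L (exp (t / 2))) - recip_op L (exp (t / 2)) / 2)
      (at t within {..0})"
proof -
  let ?x = "exp (t / 2)"
  have x: "?x \<in> {0..2}" "?x \<noteq> 0"
    using exp_half_in_domain[OF t] by auto
  have x4: "?x ^ 4 = exp (2 * t)"
    by (simp flip: exp_of_nat_mult)
  have "(recip_op L has_real_derivative (integrand L ?x + 3 - recip_op L ?x) / ?x)
      (at ?x within (\<lambda>t. exp (t / 2)) ` {..0})"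
    by (rule DERIV_subset[OF recip_op_has_derivative[OF L x]]) (use exp_half_in_domain in auto)
  moreover have "((\<lambda>t. exp (t / 2)) has_real_derivative ?x / 2) (at t within {..0})"
    by (auto intro!: derivative_eq_intros)
  ultimately have deriv: "((recip_op L \<circ> (\<lambda>t. exp (t / 2))) has_real_derivative
      (integrand L ?x + 3 - recip_op L ?x) / ?x * (?x / 2)) (at t within {..0})"
    by (rule DERIV_image_chain)
  have deriv_value: "(integrand L ?x + 3 - recip_op L ?x) / ?x * (?x / 2)
      = recip_drift \<beta> g (a * exp (2 * t)) (recip_op L ?x) - recip_op L ?x / 2"
    using x(2) unfolding integrand_def x4 fixed[OF x(1)] by (simp add: field_simps)
  show ?thesis
    using deriv unfolding deriv_value o_def .
qed

lemma recip_op_exp_tendsto: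
  assumes "L \<in> admissible"
  shows "((\<lambda>t. recip_op L (exp (t / 2))) \<longlongrightarrow> 3) at_bot"
proof -
  let ?c = "3 * a * (1/4 + \<bar>\<beta>\<bar> * C)"
  have "\<bar>recip_op L (exp (t / 2)) - 3\<bar> \<le> ?c * exp (2 * t)" if "t \<le> 0" for t
    using abs_recip_op_minus_le[OF assms exp_half_in_domain[OF that]]
    by (simp flip: exp_of_nat_mult)
  then have "eventually (\<lambda>t. norm (recip_op L (exp (t / 2)) - 3) \<le> ?c * exp (2 * t)) at_bot"
    unfolding eventually_at_bot_linorder by auto
  moreover have "((\<lambda>t. ?c * exp (2 * t)) \<longlongrightarrow> 0) at_bot"
    by real_asymp
  ultimately have "((\<lambda>t. recip_op L (exp (t / 2)) - 3) \<longlongrightarrow> 0) at_bot"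
    by (rule Lim_null_comparison)
  then show ?thesis
    by (rule LIM_zero_cancel)
qed

lemma recip_solution_unstable_traj:
  assumes L: "L \<in> admissible" and fixed: "\<And>x. x \<in> {0..2} \<Longrightarrow> recip_op L x = L x"
  shows "unstable_traj \<beta> g (1 / recip_op L 1, a)
    (\<lambda>t. (1 / recip_op L (exp (t / 2)), a * exp (2 * t)))"
  unfolding unstable_traj_def
proof (intro conjI allI impI)
  fix t :: real
  assume t: "t \<le> 0"
  let ?u = "recip_op L (exp (t / 2))"
  from exp_half_in_domain[OF t] have u: "2 \<le> ?u" "?u \<le> 4"
    using admissibleD[OF recip_op_admissible[OF L]] by auto
  have "(1 / ?u)\<^sup>2 * (a * exp (2 * t)) \<le> 1 * a"
    using u t a_pos by (intro mult_mono) (auto simp: power_le_one)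
  then show "(1 / ?u, a * exp (2 * t)) \<in> N1"
    using u a_bounds(1) by (simp add: N1_iff)
  have "((\<lambda>t. 1 / recip_op L (exp (t / 2))) has_real_derivative
      (0 * ?u - 1 * (recip_drift \<beta> g (a * exp (2 * t)) ?u - ?u / 2)) / (?u * ?u)) (at t within {..0})"
    using u by (intro DERIV_divide DERIV_const recip_op_exp_has_derivative[OF L fixed t]) auto
  moreover have "((\<lambda>t. a * exp (2 * t)) has_real_derivative 2 * (a * exp (2 * t))) (at t within {..0})"
    by (auto intro!: derivative_eq_intros)
  ultimately have "((\<lambda>t. (1 / recip_op L (exp (t / 2)), a * exp (2 * t))) has_vector_derivative
      (- (recip_drift \<beta> g (a * exp (2 * t)) ?u - ?u / 2) / ?u\<^sup>2, 2 * (a * exp (2 * t))))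
      (at t within {..0})"
    by (intro has_vector_derivative_Pair)
      (simp_all add: has_real_derivative_iff_has_vector_derivative power2_eq_square)
  then show "((\<lambda>t. (1 / recip_op L (exp (t / 2)), a * exp (2 * t))) has_vector_derivative
      F \<beta> g (1 / ?u, a * exp (2 * t))) (at t within {..0})"
    using u by (simp add: F_recip)
next
  have "((\<lambda>t. 1 / recip_op L (exp (t / 2))) \<longlongrightarrow> 1 / 3) at_bot"
    by (rule tendsto_divide[OF tendsto_const recip_op_exp_tendsto[OF L]]) simp
  moreover have "((\<lambda>t. a * exp (2 * t)) \<longlongrightarrow> 0) at_bot"
    by real_asymp
  ultimately show "((\<lambda>t. (1 / recip_op L (exp (t / 2)), a * exp (2 * t))) \<longlongrightarrow> q0) at_bot"
    unfolding q0_def by (rule tendsto_Pair)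
qed simp

lemma Wu_inter_N0_nonempty: "Wu \<beta> g \<inter> N0 \<noteq> {}"
proof -
  obtain L where "L \<in> admissible" "\<And>x. x \<in> {0..2} \<Longrightarrow> recip_op L x = L x"
    using fixed_point_exists by blast
  note traj = recip_solution_unstable_traj[OF this]
  then have "(1 / recip_op L 1, a) \<in> Wu \<beta> g"
    unfolding Wu_eq by blast
  moreover have "(1 / recip_op L 1, a) \<in> N1"
    using traj unfolding unstable_traj_def by (metis order_refl)
  ultimately show ?thesis
    using a_pos by (auto simp: N0_iff)
qed

end

section \<open>Connectedness\<close>

lemma recip_velocity_diff_mult_nonpos:
  assumes "0 \<le> w" "w \<le> 2/3" "u1 \<in> {2..4}" "u2 \<in> {2..4}"
  shows "(u1 - u2) * ((recip_drift \<beta> g w u1 - u1 / 2) - (recip_drift \<beta> g w u2 - u2 / 2)) \<le> 0"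
proof -
  let ?d = "u1 - u2" and ?r = "recip_drift \<beta> g w u1 - recip_drift \<beta> g w u2"
  have "?d * ?r \<le> \<bar>?d\<bar> * \<bar>?r\<bar>"
    by (metis abs_ge_self abs_mult)
  also have "\<dots> \<le> \<bar>?d\<bar> * (3/4 * w * \<bar>?d\<bar>)"
    using recip_drift_lipschitz[of w u1 u2 \<beta> g] assms by (intro mult_left_mono) auto
  also have "\<dots> = (3/4 * w) * \<bar>?d\<bar>\<^sup>2"
    by (simp add: power2_eq_square)
  also have "\<dots> \<le> 1/2 * \<bar>?d\<bar>\<^sup>2"
    using assms(2) by (intro mult_right_mono) auto
  also have "\<dots> = 1/2 * ?d\<^sup>2"
    by simp
  finally have "?d * ?r \<le> 1/2 * ?d\<^sup>2" .
  moreover have "?d * ((recip_drift \<beta> g w u1 - u1 / 2) - (recip_drift \<beta> g w u2 - u2 / 2))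
      = ?d * ?r - 1/2 * ?d\<^sup>2"
    by (simp add: field_simps power2_eq_square)
  ultimately show ?thesis
    by linarith
qed

lemma unstable_traj_recip_gap_has_nonpos_derivative:
  assumes traj1: "unstable_traj \<beta> g p \<gamma>" and traj2: "unstable_traj \<beta> g q \<delta>"
    and "snd p = snd q" "0 \<le> snd p" "s < 0" "snd p * exp (2 * s) \<le> 2/3"
    and "1 / fst (\<gamma> s) \<in> {2..4}" "1 / fst (\<delta> s) \<in> {2..4}"
  shows "\<exists>y. ((\<lambda>s. (1 / fst (\<gamma> s) - 1 / fst (\<delta> s))\<^sup>2) has_real_derivative y) (at s) \<and> y \<le> 0"
proof -
  let ?u1 = "1 / fst (\<gamma> s)" and ?u2 = "1 / fst (\<delta> s)" and ?w = "snd p * exp (2 * s)"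
  have w: "snd (\<gamma> s) = ?w" "snd (\<delta> s) = ?w"
    using unstable_traj_snd[OF traj1] unstable_traj_snd[OF traj2] assms(3,5) by auto
  define D' where "D' = (recip_drift \<beta> g ?w ?u1 - ?u1 / 2) - (recip_drift \<beta> g ?w ?u2 - ?u2 / 2)"
  have "((\<lambda>s. 1 / fst (\<gamma> s) - 1 / fst (\<delta> s)) has_real_derivative D') (at s)"
    using DERIV_diff[OF unstable_traj_recip_has_derivative[OF traj1 assms(5)]
        unstable_traj_recip_has_derivative[OF traj2 assms(5)]]
    unfolding D'_def w .
  from DERIV_power[OF this, of 2]
  have "((\<lambda>s. (1 / fst (\<gamma> s) - 1 / fst (\<delta> s))\<^sup>2) has_real_derivative 2 * ((?u1 - ?u2) * D')) (at s)"
    by (simp add: ac_simps)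
  moreover have "(?u1 - ?u2) * D' \<le> 0"
    unfolding D'_def using assms(4,6-8) by (intro recip_velocity_diff_mult_nonpos) auto
  ultimately show ?thesis
    by (intro exI[of _ "2 * ((?u1 - ?u2) * D')"]) (simp add: mult.commute)
qed

lemma unstable_traj_meet_same_level:
  assumes traj1: "unstable_traj \<beta> g p \<gamma>" and traj2: "unstable_traj \<beta> g q \<delta>"
    and "snd p = snd q" "0 < snd p"
  shows "\<exists>t\<le>0. \<gamma> t = \<delta> t"
proof -
  have "((\<lambda>s. snd p * exp (2 * s)) \<longlongrightarrow> 0) at_bot"
    by real_asymp
  then have "eventually (\<lambda>s. s \<le> -1 \<and> 2 < 1 / fst (\<gamma> s) \<and> 1 / fst (\<gamma> s) < 4 \<and>
      2 < 1 / fst (\<delta> s) \<and> 1 / fst (\<delta> s) < 4 \<and> snd p * exp (2 * s) < 2/3) at_bot"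
    using eventually_le_at_bot[of "-1::real"]
      order_tendstoD(1)[OF unstable_traj_recip_tendsto[OF traj1], of 2]
      order_tendstoD(2)[OF unstable_traj_recip_tendsto[OF traj1], of 4]
      order_tendstoD(1)[OF unstable_traj_recip_tendsto[OF traj2], of 2]
      order_tendstoD(2)[OF unstable_traj_recip_tendsto[OF traj2], of 4]
      order_tendstoD(2)[of "\<lambda>s. snd p * exp (2 * s)" 0 at_bot "2/3"]
    by (auto intro!: eventually_conj)
  then obtain N where N: "\<And>s. s \<le> N \<Longrightarrow> s \<le> -1 \<and> 2 < 1 / fst (\<gamma> s) \<and> 1 / fst (\<gamma> s) < 4 \<and>
      2 < 1 / fst (\<delta> s) \<and> 1 / fst (\<delta> s) < 4 \<and> snd p * exp (2 * s) < 2/3"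
    by (auto simp: eventually_at_bot_linorder)
  have "(1 / fst (\<gamma> N) - 1 / fst (\<delta> N))\<^sup>2 \<le> (3 - 3)\<^sup>2"
  proof (rule DERIV_nonpos_imp_le_limit_at_bot[where Q="\<lambda>s. (1 / fst (\<gamma> s) - 1 / fst (\<delta> s))\<^sup>2"])
    show "\<exists>y. ((\<lambda>s. (1 / fst (\<gamma> s) - 1 / fst (\<delta> s))\<^sup>2) has_real_derivative y) (at s) \<and> y \<le> 0"
      if "s \<le> N" for s
      using N[OF that] assms(4)
      by (intro unstable_traj_recip_gap_has_nonpos_derivative[OF traj1 traj2 assms(3)]) auto
    show "((\<lambda>s. (1 / fst (\<gamma> s) - 1 / fst (\<delta> s))\<^sup>2) \<longlongrightarrow> (3 - 3)\<^sup>2) at_bot"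
      by (rule tendsto_power[OF tendsto_diff[OF unstable_traj_recip_tendsto[OF traj1]
            unstable_traj_recip_tendsto[OF traj2]]])
  qed
  then have "fst (\<gamma> N) = fst (\<delta> N)"
    by simp
  moreover have "snd (\<gamma> N) = snd (\<delta> N)"
    using unstable_traj_snd[OF traj1] unstable_traj_snd[OF traj2] N[of N] assms(3) by simp
  ultimately show ?thesis
    using N[of N] by (intro exI[of _ N]) (simp add: prod_eq_iff)
qed

lemma unstable_traj_meet_le:
  assumes traj1: "unstable_traj \<beta> g p \<gamma>" and traj2: "unstable_traj \<beta> g q \<delta>"
    and "0 < snd p" "snd p \<le> snd q"
  shows "\<exists>t1\<le>0. \<exists>t2\<le>0. \<gamma> t1 = \<delta> t2"
proof -
  define \<tau> where "\<tau> = ln (snd p / snd q) / 2"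
  have "\<tau> \<le> 0" "exp (2 * \<tau>) = snd p / snd q"
    using assms(3,4) by (simp_all add: \<tau>_def)
  have "unstable_traj \<beta> g (\<delta> \<tau>) (\<lambda>s. \<delta> (s + \<tau>))"
    by (rule unstable_traj_shift[OF traj2 \<open>\<tau> \<le> 0\<close>])
  moreover have "snd p = snd (\<delta> \<tau>)"
    using unstable_traj_snd[OF traj2 \<open>\<tau> \<le> 0\<close>] \<open>exp (2 * \<tau>) = snd p / snd q\<close> assms(3,4) by simp
  ultimately obtain t where "t \<le> 0" "\<gamma> t = \<delta> (t + \<tau>)"
    using unstable_traj_meet_same_level[OF traj1 _ _ assms(3)] by blast
  moreover have "t + \<tau> \<le> 0"
    using \<open>t \<le> 0\<close> \<open>\<tau> \<le> 0\<close> by simp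
  ultimately show ?thesis
    by blast
qed

lemma unstable_traj_meet:
  assumes traj1: "unstable_traj \<beta> g p \<gamma>" and traj2: "unstable_traj \<beta> g q \<delta>"
    and "0 < snd p" "0 < snd q"
  shows "\<exists>t1\<le>0. \<exists>t2\<le>0. \<gamma> t1 = \<delta> t2"
proof (cases "snd p \<le> snd q")
  case True
  then show ?thesis
    by (rule unstable_traj_meet_le[OF traj1 traj2 assms(3)])
next
  case False
  then have "\<exists>t2\<le>0. \<exists>t1\<le>0. \<delta> t2 = \<gamma> t1"
    by (intro unstable_traj_meet_le[OF traj2 traj1 assms(4)]) simp
  then show ?thesis
    by metis
qed

lemma unstable_traj_orbit_subset:
  assumes traj: "unstable_traj \<beta> g p \<gamma>" and "0 < snd p"
  shows "\<gamma> ` {..0} \<subseteq> Wu \<beta> g \<inter> N0"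
proof (rule image_subsetI)
  fix t :: real
  assume "t \<in> {..0}"
  then have t: "t \<le> 0"
    by simp
  have "\<gamma> t \<in> Wu \<beta> g"
    unfolding Wu_eq using unstable_traj_shift[OF traj t] by blast
  moreover have "\<gamma> t \<in> N1"
    using traj t unfolding unstable_traj_def by simp
  moreover have "0 < snd (\<gamma> t)"
    using unstable_traj_snd[OF traj t] assms(2) by simp
  ultimately show "\<gamma> t \<in> Wu \<beta> g \<inter> N0"
    by (simp add: N0_iff)
qed

lemma connected_Wu_inter_N0: "connected (Wu \<beta> g \<inter> N0)"
proof (cases "Wu \<beta> g \<inter> N0 = {}")
  case False
  define S where "S = Wu \<beta> g \<inter> N0"
  obtain p0 where p0: "p0 \<in> S"
    using False unfolding S_def by blast
  have "\<forall>q\<in>S. \<exists>\<gamma>. unstable_traj \<beta> g q \<gamma>"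
    unfolding S_def Wu_eq by blast
  then obtain \<Gamma> where \<Gamma>: "\<And>q. q \<in> S \<Longrightarrow> unstable_traj \<beta> g q (\<Gamma> q)"
    by metis
  define orbit where "orbit q = \<Gamma> q ` {..0}" for q
  have pos: "0 < snd q" if "q \<in> S" for q
    using that unfolding S_def by (simp add: N0_iff)
  have orbit_subset: "orbit q \<subseteq> S" if "q \<in> S" for q
    unfolding orbit_def S_def by (rule unstable_traj_orbit_subset[OF \<Gamma>[OF that] pos[OF that]])
  have "q \<in> orbit q" if "q \<in> S" for q
    using \<Gamma>[OF that] unfolding orbit_def unstable_traj_def by force
  then have S_eq: "S = orbit p0 \<union> \<Union> (orbit ` S)"
    using orbit_subset p0 by blast
  have connected_orbit: "connected (orbit q)" if "q \<in> S" for q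
    unfolding orbit_def
    by (rule connected_continuous_image[OF unstable_traj_continuous_on[OF \<Gamma>[OF that]] connected_Iic])
  have orbits_meet: "orbit p0 \<inter> orbit q \<noteq> {}" if q: "q \<in> S" for q
  proof -
    obtain t1 t2 where "t1 \<le> 0" "t2 \<le> 0" "\<Gamma> p0 t1 = \<Gamma> q t2"
      using unstable_traj_meet[OF \<Gamma>[OF p0] \<Gamma>[OF q] pos[OF p0] pos[OF q]] by blast
    then show ?thesis
      unfolding orbit_def by blast
  qed
  have "connected (orbit p0 \<union> \<Union> (orbit ` S))"
    by (rule connected_Un_UN) (use connected_orbit orbits_meet p0 in auto)
  then show ?thesis
    unfolding S_def[symmetric] S_eq[symmetric] .
qed simp

theorem lemmaA3:
  fixes g :: "real \<Rightarrow> real" and \<beta> :: real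
  assumes "real_analytic g"
    and "\<forall>v>0. g v > 0"
  shows "Wu \<beta> g \<inter> N0 \<noteq> {} \<and> connected (Wu \<beta> g \<inter> N0)"
proof -
  have g_cont: "continuous_on UNIV g"
    using real_analytic_imp_isCont[OF assms(1)] by (simp add: continuous_at_imp_continuous_on)
  then have "bounded (g ` {0..1})"
    by (intro compact_imp_bounded compact_continuous_image continuous_on_subset[OF g_cont]) auto
  then obtain C where "\<forall>y\<in>g ` {0..1}. norm y \<le> C"
    unfolding bounded_iff by blast
  then have C: "\<And>w. w \<in> {0..1} \<Longrightarrow> \<bar>g w\<bar> \<le> C"
    by simp
  then have "0 \<le> C"
    by (metis abs_ge_zero atLeastAtMost_iff order_trans zero_le_one order_refl)
  interpret recip_integral_equation \<beta> g C "1 / (48 * (1 + \<bar>\<beta>\<bar> * C))"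
    by unfold_locales (use g_cont C \<open>0 \<le> C\<close> in \<open>auto simp: add_pos_nonneg\<close>)
  show ?thesis
    using Wu_inter_N0_nonempty connected_Wu_inter_N0 by blast
qed

end
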